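(* In the Boosted HiPPA setting of the context, let $\{x^k\}$ and $\{\bar x^k\}$ be generated by the algorithm and let $\bar y^k\in\operatorname{prox}^p_{\gamma\varphi}(x^k)$ satisfy $\|\bar x^k-\bar y^k\|=\operatorname{dist}(\bar x^k,\operatorname{prox}^p_{\gamma\varphi}(x^k))$. Then: (a) $\sum_{k=0}^\infty\|R^{\varepsilon_k}_\gamma(x^k)\|^p<\infty$ and $R^{\varepsilon_k}_\gamma(x^k)\to0$; (b) $\{x^k\},\{\bar x^k\},\{\bar y^k\}$ have the same cluster points (if any), and each cluster point is a proximal fixed point, i.e., a point $\hat x$ with $\hat x\in\operatorname{prox}^p_{\gamma\varphi}(\hat x)$; (c) there is a finite $\mathcal{F}\in\mathbb{R}$ with $\lim_k\varphi^p_\gamma(x^k)=\lim_k\varphi(\bar y^k)=\lim_k\varphi^{p,\varepsilon_k}_\gamma(x^k)=\lim_k\varphi(\bar x^k)=\mathcal{F}$; moreover, if $\hat x$ is a cluster point of $\{x^k\}$ then $\varphi(\hat x)=\varphi^p_\gamma(\hat x)=\mathcal{F}$; finally, if $\{x^k\}$ is bounded then $\lim_k\varphi^p_\gamma(\bar y^k)=\mathcal{F}$; (d) $\varphi$ and $\varphi^p_\gamma$ are constant on the set of cluster points of $\{x^k\}$ (if any).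
   Context: Standing setting. $p>1$; $\varphi:\mathbb{R}^n\to\mathbb{R}\cup\{+\infty\}$ is proper, lsc and bounded from below. For $\gamma>0$: $\operatorname{prox}^p_{\gamma\varphi}(x):=\operatorname{argmin}_y\big(\varphi(y)+\frac1{p\gamma}\|x-y\|^p\big)$, $\varphi^p_\gamma(x):=\inf_y\big(\varphi(y)+\frac1{p\gamma}\|x-y\|^p\big)$. $\{\varepsilon_k\},\{\delta_k\}$ are non-increasing positive sequences with $\sum_k\varepsilon_k<\infty$, $\delta_k\downarrow0$. Prox approximation: for each index $j$ and point $x$ needed, a point $P_j(x)$ (written $\operatorname{prox}^{p,\varepsilon_j}_{\gamma\varphi}(x)$) is available with $\operatorname{dist}(P_j(x),\operatorname{prox}^p_{\gamma\varphi}(x))<\delta_j$ and $\varphi(P_j(x))+\frac1{p\gamma}\|x-P_j(x)\|^p<\varphi^p_\gamma(x)+\varepsilon_j$. Define $\varphi^{p,\varepsilon_j}_\gamma(x):=\varphi(P_j(x))+\frac1{p\gamma}\|x-P_j(x)\|^p$, $R^{\varepsilon_j}_\gamma(x):=x-P_j(x)$. Boosted HiPPA: choose $x^0$, $\gamma>0$, $\sigma\in(0,\frac1{p\gamma})$, $\vartheta\in(0,1)$. At iteration $k$: $\bar x^k:=P_k(x^k)$; choose a direction $d^k$; for $m=0,1,\dots$ set $\alpha_k=\vartheta^m$, $\hat x^{k+1}=(1-\alpha_k)\bar x^k+\alpha_k(x^k+d^k)$, until $\varphi^{p,\varepsilon_{k+1}}_\gamma(\hat x^{k+1})\le\varphi^{p,\varepsilon_k}_\gamma(x^k)-\sigma\|R^{\varepsilon_k}_\gamma(x^k)\|^p+\varepsilon_k+\varepsilon_{k+1}$;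 set $x^{k+1}=\hat x^{k+1}$. *)

theory Defs
  imports "HOL-Analysis.Analysis"
begin

(* Extended-real valued functions phi : 'a => real \<union> {+\<infinity>}  are modelled as 'a => ereal
   with the value -\<infinity> excluded (part of properness). *)

definition proper_fun :: "('a \<Rightarrow> ereal) \<Rightarrow> bool" where
  "proper_fun \<phi> \<longleftrightarrow> (\<exists>x. \<phi> x \<noteq> \<infinity>) \<and> (\<forall>x. \<phi> x \<noteq> -\<infinity>)"

definition lsc_fun :: "('a::topological_space \<Rightarrow> ereal) \<Rightarrow> bool" where
  "lsc_fun \<phi> \<longleftrightarrow> (\<forall>x. \<phi> x \<le> Liminf (at x) \<phi>)"

definition bounded_below_fun :: "('a \<Rightarrow> ereal) \<Rightarrow> bool" where
  "bounded_below_fun \<phi> \<longleftrightarrow> (\<exists>b::real. \<forall>x. ereal b \<le> \<phi> x)"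

definition prox_obj :: "('a::real_normed_vector \<Rightarrow> ereal) \<Rightarrow> real \<Rightarrow> real \<Rightarrow> 'a \<Rightarrow> 'a \<Rightarrow> ereal" where
  "prox_obj \<phi> p \<gamma> x y = \<phi> y + ereal (norm (x - y) powr p / (p * \<gamma>))"

definition hprox :: "('a::real_normed_vector \<Rightarrow> ereal) \<Rightarrow> real \<Rightarrow> real \<Rightarrow> 'a \<Rightarrow> 'a set" where
  "hprox \<phi> p \<gamma> x = {y. \<forall>z. prox_obj \<phi> p \<gamma> x y \<le> prox_obj \<phi> p \<gamma> x z}"

definition hmoreau :: "('a::real_normed_vector \<Rightarrow> ereal) \<Rightarrow> real \<Rightarrow> real \<Rightarrow> 'a \<Rightarrow> ereal" where
  "hmoreau \<phi> p \<gamma> x = (INF y. prox_obj \<phi> p \<gamma> x y)"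

definition inexact_prox :: "('a::real_normed_vector \<Rightarrow> ereal) \<Rightarrow> real \<Rightarrow> real \<Rightarrow> real \<Rightarrow> real \<Rightarrow> 'a \<Rightarrow> 'a \<Rightarrow> bool" where
  "inexact_prox \<phi> p \<gamma> \<epsilon> \<delta> x u \<longleftrightarrow>
     infdist u (hprox \<phi> p \<gamma> x) < \<delta> \<and> prox_obj \<phi> p \<gamma> x u < hmoreau \<phi> p \<gamma> x + ereal \<epsilon>"

definition cluster_pt :: "(nat \<Rightarrow> 'a::topological_space) \<Rightarrow> 'a \<Rightarrow> bool" where
  "cluster_pt s c \<longleftrightarrow> (\<exists>r. strict_mono r \<and> (s \<circ> r) \<longlonglongrightarrow> c)"

end

theory Submission
  imports Defs
begin

(* The accepted line-search step is a sufficient-decrease inequality for the values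
   phi^{p,eps_k}_gamma(x^k), which are bounded below and perturbed only by summable errors, so the
   residuals ||x^k - xbar^k||^p are summable and the values converge to some F.  They sandwich
   phi^p_gamma(x^k) up to eps_k, and ||xbar^k - ybar^k|| < delta_k; hence all value sequences tend
   to F and the three sequences of points are asymptotically equal.  At a cluster point c, lower
   semicontinuity gives phi(c) <= F, and passing to the limit in
   phi^p_gamma(x^k) <= phi(z) + ||x^k - z||^p / (p gamma) gives F <= phi(z) + ||c - z||^p / (p gamma)
   for all z, so c is a proximal fixed point with value F.  Finally, convexity of t^p gives
   (u + v)^p <= l^(1-p) u^p + (1-l)^(1-p) v^p, which bounds l^(p-1) phi^p_gamma(x) by
   phi^p_gamma(y) plus a multiple of ||x - y||^p (both measured from the lower bound of phi);
   letting l -> 1 yields phi^p_gamma(ybar^k) -> F, even for unbounded iterates. *)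

lemma lsc_fun_LIMSEQ_le:
  fixes \<phi> :: "'a::metric_space \<Rightarrow> ereal"
  assumes lsc: "lsc_fun \<phi>" and s: "s \<longlonglongrightarrow> c" and \<phi>s: "(\<lambda>n. \<phi> (s n)) \<longlonglongrightarrow> L"
  shows "\<phi> c \<le> L"
proof (rule ccontr)
  assume "\<not> \<phi> c \<le> L"
  then obtain M where "L < M" and "M < \<phi> c" using dense[of L "\<phi> c"] by (auto simp: not_le)
  then have "M < Liminf (at c) \<phi>" using lsc unfolding lsc_fun_def by (meson less_le_trans)
  then have "eventually (\<lambda>y. M < \<phi> y) (at c)" by (rule less_LiminfD)
  then obtain e where "e > 0" and e: "\<And>y. y \<noteq> c \<Longrightarrow> dist y c < e \<Longrightarrow> M < \<phi> y"
    unfolding eventually_at by auto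
  have "eventually (\<lambda>n. dist (s n) c < e \<and> \<phi> (s n) < M) sequentially"
    using tendstoD[OF s \<open>e > 0\<close>] order_tendstoD(2)[OF \<phi>s \<open>L < M\<close>] by (rule eventually_conj)
  then obtain n where "dist (s n) c < e" "\<phi> (s n) < M" by (auto simp: eventually_sequentially)
  then show False using e \<open>M < \<phi> c\<close> by (cases "s n = c") force+
qed

lemma cluster_pt_cong_tendsto_diff:
  fixes s t :: "nat \<Rightarrow> 'a::real_normed_vector"
  assumes "(\<lambda>k. s k - t k) \<longlonglongrightarrow> 0"
  shows "cluster_pt s c \<longleftrightarrow> cluster_pt t c"
proof -
  have shift: "cluster_pt v c" if "(\<lambda>k. u k - v k) \<longlonglongrightarrow> 0" "cluster_pt u c" for u v :: "nat \<Rightarrow> 'a"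
  proof -
    obtain r where r: "strict_mono r" "(u \<circ> r) \<longlonglongrightarrow> c" using \<open>cluster_pt u c\<close> unfolding cluster_pt_def by blast
    have "(\<lambda>n. u (r n) - (u (r n) - v (r n))) \<longlonglongrightarrow> c - 0"
      using r LIMSEQ_subseq_LIMSEQ[OF that(1) r(1)] by (intro tendsto_diff) (auto simp: comp_def)
    then show ?thesis using r(1) unfolding cluster_pt_def comp_def by auto
  qed
  have "(\<lambda>k. t k - s k) \<longlonglongrightarrow> 0" using tendsto_minus[OF assms] by simp
  then show ?thesis using shift assms by blast
qed

lemma powr_add_le_convex_split:
  fixes u v p l :: real
  assumes "p \<ge> 1" "0 < l" "l < 1" "u \<ge> 0" "v \<ge> 0"
  shows "(u + v) powr p \<le> l powr (1 - p) * u powr p + (1 - l) powr (1 - p) * v powr p"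
proof -
  have ge1: "1 \<le> w powr (1 - p)" if "0 < w" "w < 1" for w :: real
  proof -
    have "w powr (1 - p) = (1 / w) powr (p - 1)"
      using that by (simp add: powr_divide powr_minus_divide[symmetric] powr_minus)
    also have "1 \<le> \<dots>" using that assms by (intro ge_one_powr_ge_zero) auto
    finally show ?thesis .
  qed
  consider "u = 0" | "v = 0" | "u > 0" "v > 0" using assms by linarith
  then show ?thesis
  proof cases
    case 1
    then show ?thesis using ge1[of "1 - l"] assms mult_right_mono[of 1 _ "v powr p"] by simp
  next
    case 2
    then show ?thesis using ge1[of l] assms mult_right_mono[of 1 _ "u powr p"] by simp
  next
    case 3
    have "((1 - (1 - l)) * (u / l) + (1 - l) * (v / (1 - l))) powr p
        \<le> (1 - (1 - l)) * (u / l) powr p + (1 - l) * (v / (1 - l)) powr p"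
      using convex_onD[OF powr_convex[OF \<open>p \<ge> 1\<close>], of "1 - l" "u / l" "v / (1 - l)"] 3 assms by simp
    then show ?thesis using assms by (simp add: powr_divide powr_diff)
  qed
qed

lemma norm_diff_powr_le_split:
  fixes x y z :: "'a::real_normed_vector"
  assumes "p \<ge> 1" "0 < l" "l < 1"
  shows "norm (x - z) powr p \<le> l powr (1 - p) * norm (y - z) powr p + (1 - l) powr (1 - p) * norm (x - y) powr p"
proof -
  have "norm (x - z) powr p \<le> (norm (y - z) + norm (x - y)) powr p"
    using norm_triangle_ineq[of "y - z" "x - y"] assms by (intro powr_mono2) auto
  also have "\<dots> \<le> l powr (1 - p) * norm (y - z) powr p + (1 - l) powr (1 - p) * norm (x - y) powr p"
    using assms by (intro powr_add_le_convex_split) auto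
  finally show ?thesis .
qed

lemma descent_summable_convergent:
  fixes a r e :: "nat \<Rightarrow> real"
  assumes descent: "\<And>n. a (Suc n) \<le> a n - r n + e n"
    and r_nonneg: "\<And>n. 0 \<le> r n" and e_nonneg: "\<And>n. 0 \<le> e n" and e_summable: "summable e"
    and lower: "\<And>n. b \<le> a n"
  shows "summable r" and "convergent a"
proof -
  have partial: "(\<Sum>k<n. r k) + a n \<le> a 0 + (\<Sum>k<n. e k)" for n
  proof (induction n)
    case (Suc n)
    then show ?case using descent[of n] by simp
  qed simp
  have e_bound: "(\<Sum>k<n. e k) \<le> suminf e" for n
    using e_summable e_nonneg by (intro sum_le_suminf) auto
  show "summable r"
  proof (rule summableI_nonneg_bounded)
    show "(\<Sum>k<n. r k) \<le> a 0 + suminf e - b" for n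
      using partial[of n] e_bound[of n] lower[of n] by linarith
  qed (rule r_nonneg)
  define g where "g n = a n - (\<Sum>k<n. e k)" for n
  have "decseq g"
  proof (rule decseq_SucI)
    show "g (Suc n) \<le> g n" for n
      using descent[of n] r_nonneg[of n] unfolding g_def by simp
  qed
  moreover have "\<forall>n. b - suminf e \<le> g n"
  proof
    show "b - suminf e \<le> g n" for n
      using lower[of n] e_bound[of n] unfolding g_def by linarith
  qed
  ultimately obtain L where "g \<longlonglongrightarrow> L" by (rule decseq_convergent)
  then have "(\<lambda>n. g n + (\<Sum>k<n. e k)) \<longlonglongrightarrow> L + suminf e"
    using summable_LIMSEQ[OF e_summable] by (rule tendsto_add)
  then show "convergent a" unfolding g_def convergent_def by auto
qed

lemma hmoreau_le_prox_obj: "hmoreau \<phi> p \<gamma> x \<le> prox_obj \<phi> p \<gamma> x z"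
  unfolding hmoreau_def by (rule INF_lower) simp

lemma prox_obj_hprox: "y \<in> hprox \<phi> p \<gamma> x \<Longrightarrow> prox_obj \<phi> p \<gamma> x y = hmoreau \<phi> p \<gamma> x"
  unfolding hprox_def hmoreau_def by (auto intro: antisym INF_greatest INF_lower)

lemma prox_obj_self: "p > 0 \<Longrightarrow> prox_obj \<phi> p \<gamma> x x = \<phi> x"
  unfolding prox_obj_def by simp

lemma prox_obj_infinite_iff: "prox_obj \<phi> p \<gamma> x z = \<infinity> \<longleftrightarrow> \<phi> z = \<infinity>"
  unfolding prox_obj_def by (cases "\<phi> z") auto

locale hprox_setting =
  fixes \<phi> :: "'a::real_normed_vector \<Rightarrow> ereal" and p \<gamma> b :: real
  assumes p_gt_1: "p > 1" and \<gamma>_pos: "\<gamma> > 0"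
    and proper: "proper_fun \<phi>" and lower_bound: "\<And>z. ereal b \<le> \<phi> z"
begin

definition env :: "'a \<Rightarrow> real" where
  "env x = real_of_ereal (hmoreau \<phi> p \<gamma> x)"

lemma prox_obj_eq_real:
  assumes "\<phi> z \<noteq> \<infinity>"
  shows "prox_obj \<phi> p \<gamma> x z = ereal (real_of_ereal (\<phi> z) + norm (x - z) powr p / (p * \<gamma>))"
  using assms lower_bound[of z] unfolding prox_obj_def by (cases "\<phi> z") auto

lemma real_phi_ge: "\<phi> z \<noteq> \<infinity> \<Longrightarrow> b \<le> real_of_ereal (\<phi> z)"
  using lower_bound[of z] by (cases "\<phi> z") auto

lemma phi_le_prox_obj: "\<phi> z \<le> prox_obj \<phi> p \<gamma> x z"
  unfolding prox_obj_def using p_gt_1 \<gamma>_pos by (simp add: add_increasing2)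

lemma hmoreau_ge: "ereal b \<le> hmoreau \<phi> p \<gamma> x"
  unfolding hmoreau_def using lower_bound phi_le_prox_obj by (blast intro: INF_greatest order_trans)

lemma hmoreau_eq_env: "hmoreau \<phi> p \<gamma> x = ereal (env x)"
proof -
  obtain z where "\<phi> z \<noteq> \<infinity>" using proper unfolding proper_fun_def by blast
  then have "hmoreau \<phi> p \<gamma> x \<noteq> \<infinity>"
    using hmoreau_le_prox_obj[of \<phi> p \<gamma> x z] prox_obj_infinite_iff[of \<phi> p \<gamma> x z] by auto
  then show ?thesis using hmoreau_ge[of x] unfolding env_def by (cases "hmoreau \<phi> p \<gamma> x") auto
qed

lemma env_ge: "b \<le> env x"
  using hmoreau_ge[of x] by (simp add: hmoreau_eq_env)

lemma env_le: "\<phi> z \<noteq> \<infinity> \<Longrightarrow> env x \<le> real_of_ereal (\<phi> z) + norm (x - z) powr p / (p * \<gamma>)"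
  using hmoreau_le_prox_obj[of \<phi> p \<gamma> x z] by (simp add: hmoreau_eq_env prox_obj_eq_real)

lemma env_le_phi: "ereal (env x) \<le> \<phi> x"
  using hmoreau_le_prox_obj[of \<phi> p \<gamma> x x] p_gt_1 by (simp add: prox_obj_self hmoreau_eq_env)

lemma env_perturbation:
  assumes "0 < l" "l < 1"
  obtains C where "\<And>x y. l powr (p - 1) * (env x - b) \<le> env y - b + C * norm (x - y) powr p"
proof
  define C where "C = l powr (p - 1) * (1 - l) powr (1 - p) / (p * \<gamma>)"
  fix x y
  have "ereal (b + l powr (p - 1) * (env x - b) - C * norm (x - y) powr p) \<le> hmoreau \<phi> p \<gamma> y"
    unfolding hmoreau_def
  proof (rule INF_greatest)
    fix z
    show "ereal (b + l powr (p - 1) * (env x - b) - C * norm (x - y) powr p) \<le> prox_obj \<phi> p \<gamma> y z"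
    proof (cases "\<phi> z = \<infinity>")
      case True
      then show ?thesis by (simp add: prox_obj_def)
    next
      case False
      define f where "f = real_of_ereal (\<phi> z)"
      have pg: "p * \<gamma> > 0" using p_gt_1 \<gamma>_pos by simp
      have split: "norm (x - z) powr p / (p * \<gamma>)
          \<le> (l powr (1 - p) * norm (y - z) powr p + (1 - l) powr (1 - p) * norm (x - y) powr p) / (p * \<gamma>)"
        using norm_diff_powr_le_split[of p l x z y] assms p_gt_1 pg by (intro divide_right_mono) auto
      have "l powr (p - 1) * (env x - b) \<le> l powr (p - 1) * (f - b + norm (x - z) powr p / (p * \<gamma>))"
        using env_le[OF False, of x] unfolding f_def by (intro mult_left_mono) auto
      also have "\<dots> \<le> l powr (p - 1) * (f - b
          + (l powr (1 - p) * norm (y - z) powr p + (1 - l) powr (1 - p) * norm (x - y) powr p) / (p * \<gamma>))"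
        using split by (intro mult_left_mono) auto
      also have "\<dots> = l powr (p - 1) * (f - b) + norm (y - z) powr p / (p * \<gamma>) + C * norm (x - y) powr p"
        using assms by (simp add: C_def distrib_left add_divide_distrib mult.assoc[symmetric]
            powr_add[symmetric])
      also have "\<dots> \<le> (f - b) + norm (y - z) powr p / (p * \<gamma>) + C * norm (x - y) powr p"
        using real_phi_ge[OF False] assms p_gt_1 powr_le1[of "p - 1" l]
        unfolding f_def by (simp add: mult_left_le_one_le)
      finally show ?thesis using prox_obj_eq_real[OF False] unfolding f_def by simp
    qed
  qed
  then show "l powr (p - 1) * (env x - b) \<le> env y - b + C * norm (x - y) powr p"
    by (simp add: hmoreau_eq_env)
qed

lemma eventually_env_gt_of_close:
  assumes env_x: "(\<lambda>k. env (x k)) \<longlonglongrightarrow> F" and close: "(\<lambda>k. x k - y k) \<longlonglongrightarrow> 0" and "c < F"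
  shows "eventually (\<lambda>k. c < env (y k)) sequentially"
proof -
  have "((\<lambda>l. l powr (p - 1) * (F - b) + b) \<longlongrightarrow> 1 powr (p - 1) * (F - b) + b) (at_left 1)"
    by (intro tendsto_intros) auto
  then have "eventually (\<lambda>l. c < l powr (p - 1) * (F - b) + b) (at_left 1)"
    using \<open>c < F\<close> by (intro order_tendstoD(1)) auto
  then have "eventually (\<lambda>l. l \<in> {0<..<1} \<and> c < l powr (p - 1) * (F - b) + b) (at_left 1)"
    using eventually_at_left_real[of 0 1] by (intro eventually_conj) auto
  then obtain l where l: "0 < l" "l < 1" and c_less: "c < l powr (p - 1) * (F - b) + b"
    using eventually_happens'[OF trivial_limit_at_left_real] by auto
  obtain C where C: "\<And>x y. l powr (p - 1) * (env x - b) \<le> env y - b + C * norm (x - y) powr p"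
    using env_perturbation[OF l] by blast
  have "(\<lambda>k. norm (x k - y k) powr p) \<longlonglongrightarrow> 0"
    using close p_gt_1 by (intro tendsto_zero_powrI) (auto simp: tendsto_norm_zero_iff)
  then have "(\<lambda>k. l powr (p - 1) * (env (x k) - b) + b - C * norm (x k - y k) powr p)
      \<longlonglongrightarrow> l powr (p - 1) * (F - b) + b - C * 0"
    using env_x by (intro tendsto_intros)
  then have "eventually (\<lambda>k. c < l powr (p - 1) * (env (x k) - b) + b - C * norm (x k - y k) powr p) sequentially"
    using c_less by (intro order_tendstoD(1)) auto
  then show ?thesis
    by (rule eventually_mono) (smt (verit) C)
qed

lemma phi_tendsto_of_prox_obj:
  assumes obj: "(\<lambda>k. prox_obj \<phi> p \<gamma> (x k) (u k)) \<longlonglongrightarrow> ereal F" and close: "(\<lambda>k. x k - u k) \<longlonglongrightarrow> 0"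
  shows "(\<lambda>k. \<phi> (u k)) \<longlonglongrightarrow> ereal F"
proof -
  have "(\<lambda>k. norm (x k - u k) powr p / (p * \<gamma>)) \<longlonglongrightarrow> 0"
    using close p_gt_1 by (intro tendsto_divide_zero tendsto_zero_powrI) (auto simp: tendsto_norm_zero_iff)
  then have "(\<lambda>k. prox_obj \<phi> p \<gamma> (x k) (u k) - ereal (norm (x k - u k) powr p / (p * \<gamma>)))
      \<longlonglongrightarrow> ereal F - ereal 0"
    using obj by (intro tendsto_diff_ereal) auto
  then show ?thesis by (simp add: prox_obj_def ereal_add_diff_cancel)
qed

lemma hprox_fixed_point_of_limits:
  assumes lsc: "lsc_fun \<phi>" and xs: "xs \<longlonglongrightarrow> c" and ys: "ys \<longlonglongrightarrow> c"
    and env_xs: "(\<lambda>n. env (xs n)) \<longlonglongrightarrow> F" and phi_ys: "(\<lambda>n. \<phi> (ys n)) \<longlonglongrightarrow> ereal F"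
  shows "\<phi> c = ereal F" and "hmoreau \<phi> p \<gamma> c = ereal F" and "c \<in> hprox \<phi> p \<gamma> c"
proof -
  have below: "ereal F \<le> prox_obj \<phi> p \<gamma> c z" for z
  proof (cases "\<phi> z = \<infinity>")
    case True
    then show ?thesis by (simp add: prox_obj_def)
  next
    case False
    have "(\<lambda>n. real_of_ereal (\<phi> z) + norm (xs n - z) powr p / (p * \<gamma>))
        \<longlonglongrightarrow> real_of_ereal (\<phi> z) + norm (c - z) powr p / (p * \<gamma>)"
      using xs p_gt_1 \<gamma>_pos by (intro tendsto_intros) auto
    then have "F \<le> real_of_ereal (\<phi> z) + norm (c - z) powr p / (p * \<gamma>)"
      using env_xs env_le[OF False] by (intro LIMSEQ_le) auto
    then show ?thesis using prox_obj_eq_real[OF False] by simp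
  qed
  have self: "prox_obj \<phi> p \<gamma> c c = \<phi> c" using p_gt_1 by (simp add: prox_obj_self)
  show phi_c: "\<phi> c = ereal F"
    using lsc_fun_LIMSEQ_le[OF lsc ys phi_ys] below[of c] self by simp
  show "hmoreau \<phi> p \<gamma> c = ereal F"
    using hmoreau_le_prox_obj[of \<phi> p \<gamma> c c] below self phi_c
    unfolding hmoreau_def by (auto intro: antisym INF_greatest)
  show "c \<in> hprox \<phi> p \<gamma> c"
    using below self phi_c unfolding hprox_def by simp
qed

end

locale inexact_prox_descent = hprox_setting \<phi> p \<gamma> b
  for \<phi> :: "'a::real_normed_vector \<Rightarrow> ereal" and p \<gamma> b +
  fixes \<sigma> :: real and \<epsilon> \<delta> :: "nat \<Rightarrow> real" and x xbar ybar :: "nat \<Rightarrow> 'a"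
  assumes \<sigma>_pos: "\<sigma> > 0"
    and \<epsilon>_nonneg: "\<And>k. 0 \<le> \<epsilon> k" and \<epsilon>_summable: "summable \<epsilon>" and \<delta>_tendsto: "\<delta> \<longlonglongrightarrow> 0"
    and xbar_inexact: "\<And>k. inexact_prox \<phi> p \<gamma> (\<epsilon> k) (\<delta> k) (x k) (xbar k)"
    and ybar_hprox: "\<And>k. ybar k \<in> hprox \<phi> p \<gamma> (x k)"
    and ybar_nearest: "\<And>k. norm (xbar k - ybar k) = infdist (xbar k) (hprox \<phi> p \<gamma> (x k))"
    and sufficient_decrease: "\<And>k. prox_obj \<phi> p \<gamma> (x (Suc k)) (xbar (Suc k))
          \<le> prox_obj \<phi> p \<gamma> (x k) (xbar k) - ereal (\<sigma> * norm (x k - xbar k) powr p)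
             + ereal (\<epsilon> k) + ereal (\<epsilon> (Suc k))"
begin

definition inexact_env :: "nat \<Rightarrow> real" where
  "inexact_env k = real_of_ereal (prox_obj \<phi> p \<gamma> (x k) (xbar k))"

definition limit_value :: real where
  "limit_value = lim inexact_env"

lemma prox_obj_xbar: "prox_obj \<phi> p \<gamma> (x k) (xbar k) = ereal (inexact_env k)"
  and inexact_env_bounds: "env (x k) \<le> inexact_env k" "inexact_env k < env (x k) + \<epsilon> k"
proof -
  have less: "prox_obj \<phi> p \<gamma> (x k) (xbar k) < ereal (env (x k) + \<epsilon> k)"
    using xbar_inexact[of k] by (simp add: inexact_prox_def hmoreau_eq_env)
  then have "\<phi> (xbar k) \<noteq> \<infinity>" using prox_obj_infinite_iff[of \<phi> p \<gamma> "x k" "xbar k"] by auto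
  then show eq: "prox_obj \<phi> p \<gamma> (x k) (xbar k) = ereal (inexact_env k)"
    unfolding inexact_env_def by (simp add: prox_obj_eq_real)
  show "env (x k) \<le> inexact_env k"
    using hmoreau_le_prox_obj[of \<phi> p \<gamma> "x k" "xbar k"] by (simp add: eq hmoreau_eq_env)
  show "inexact_env k < env (x k) + \<epsilon> k" using less by (simp add: eq)
qed

lemma residual_summable: "summable (\<lambda>k. norm (x k - xbar k) powr p)"
  and inexact_env_convergent: "convergent inexact_env"
proof -
  have descent: "inexact_env (Suc k) \<le> inexact_env k - \<sigma> * norm (x k - xbar k) powr p + (\<epsilon> k + \<epsilon> (Suc k))" for k
    using sufficient_decrease[of k] unfolding prox_obj_xbar by simp
  have "0 \<le> \<sigma> * norm (x k - xbar k) powr p" for k using \<sigma>_pos by simp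
  moreover have "0 \<le> \<epsilon> k + \<epsilon> (Suc k)" for k using \<epsilon>_nonneg by (simp add: add_nonneg_nonneg)
  moreover have "summable (\<lambda>k. \<epsilon> k + \<epsilon> (Suc k))"
    using \<epsilon>_summable by (intro summable_add) (auto simp: summable_Suc_iff)
  moreover have "b \<le> inexact_env k" for k
    using env_ge[of "x k"] inexact_env_bounds(1)[of k] by linarith
  ultimately have "summable (\<lambda>k. \<sigma> * norm (x k - xbar k) powr p)" "convergent inexact_env"
    using descent_summable_convergent[where r = "\<lambda>k. \<sigma> * norm (x k - xbar k) powr p",
        OF descent] by blast+
  then show "summable (\<lambda>k. norm (x k - xbar k) powr p)" "convergent inexact_env"
    using \<sigma>_pos by simp_all
qed

lemma inexact_env_tendsto: "inexact_env \<longlonglongrightarrow> limit_value"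
  using inexact_env_convergent unfolding limit_value_def by (rule convergent_LIMSEQ_iff[THEN iffD1])

lemma residual_tendsto_zero: "(\<lambda>k. x k - xbar k) \<longlonglongrightarrow> 0"
proof -
  have "(\<lambda>k. (norm (x k - xbar k) powr p) powr (1 / p)) \<longlonglongrightarrow> 0"
    using p_gt_1 by (intro tendsto_zero_powrI[OF summable_LIMSEQ_zero[OF residual_summable] tendsto_const]) auto
  then have "(\<lambda>k. norm (x k - xbar k)) \<longlonglongrightarrow> 0" using p_gt_1 by (simp add: powr_powr)
  then show ?thesis by (rule tendsto_norm_zero_cancel)
qed

lemma ybar_tendsto_diff: "(\<lambda>k. x k - ybar k) \<longlonglongrightarrow> 0"
proof -
  have bound: "norm (x k - ybar k) \<le> norm (x k - xbar k) + \<delta> k" for k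
  proof -
    have "norm (xbar k - ybar k) < \<delta> k"
      using ybar_nearest[of k] xbar_inexact[of k] unfolding inexact_prox_def by simp
    then show ?thesis using norm_triangle_ineq[of "x k - xbar k" "xbar k - ybar k"] by simp
  qed
  have majorant: "(\<lambda>k. norm (x k - xbar k) + \<delta> k) \<longlonglongrightarrow> 0"
    using tendsto_add[OF tendsto_norm_zero[OF residual_tendsto_zero] \<delta>_tendsto] by simp
  have "(\<lambda>k. norm (x k - ybar k)) \<longlonglongrightarrow> 0"
    by (rule tendsto_sandwich[OF _ _ tendsto_const majorant]) (simp_all add: bound)
  then show ?thesis by (rule tendsto_norm_zero_cancel)
qed

lemma env_tendsto: "(\<lambda>k. env (x k)) \<longlonglongrightarrow> limit_value"
proof (rule tendsto_sandwich[of "\<lambda>k. inexact_env k - \<epsilon> k" _ _ inexact_env])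
  show "(\<lambda>k. inexact_env k - \<epsilon> k) \<longlonglongrightarrow> limit_value"
    using tendsto_diff[OF inexact_env_tendsto summable_LIMSEQ_zero[OF \<epsilon>_summable]] by simp
qed (use inexact_env_bounds inexact_env_tendsto in \<open>auto simp: algebra_simps less_imp_le\<close>)

lemma hmoreau_tendsto: "(\<lambda>k. hmoreau \<phi> p \<gamma> (x k)) \<longlonglongrightarrow> ereal limit_value"
  using env_tendsto by (simp add: hmoreau_eq_env)

lemma prox_obj_xbar_tendsto: "(\<lambda>k. prox_obj \<phi> p \<gamma> (x k) (xbar k)) \<longlonglongrightarrow> ereal limit_value"
  using inexact_env_tendsto by (simp add: prox_obj_xbar)

lemma phi_xbar_tendsto: "(\<lambda>k. \<phi> (xbar k)) \<longlonglongrightarrow> ereal limit_value"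
  using prox_obj_xbar_tendsto residual_tendsto_zero by (rule phi_tendsto_of_prox_obj)

lemma phi_ybar_tendsto: "(\<lambda>k. \<phi> (ybar k)) \<longlonglongrightarrow> ereal limit_value"
  using env_tendsto ybar_tendsto_diff
  by (intro phi_tendsto_of_prox_obj[where x = x]) (simp_all add: prox_obj_hprox[OF ybar_hprox] hmoreau_eq_env)

lemma hmoreau_ybar_tendsto: "(\<lambda>k. hmoreau \<phi> p \<gamma> (ybar k)) \<longlonglongrightarrow> ereal limit_value"
proof -
  have "(\<lambda>k. env (ybar k)) \<longlonglongrightarrow> limit_value"
  proof (rule order_tendstoI)
    show "eventually (\<lambda>k. c < env (ybar k)) sequentially" if "c < limit_value" for c
      using env_tendsto ybar_tendsto_diff that by (rule eventually_env_gt_of_close)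
    show "eventually (\<lambda>k. env (ybar k) < c) sequentially" if "limit_value < c" for c
    proof -
      have "eventually (\<lambda>k. \<phi> (ybar k) < ereal c) sequentially"
        using phi_ybar_tendsto that by (intro order_tendstoD(2)) auto
      then show ?thesis
        by (rule eventually_mono) (meson env_le_phi le_less_trans less_ereal.simps(1))
    qed
  qed
  then show ?thesis by (simp add: hmoreau_eq_env)
qed

lemma cluster_pt_iff_xbar: "cluster_pt x c \<longleftrightarrow> cluster_pt xbar c"
  using residual_tendsto_zero by (rule cluster_pt_cong_tendsto_diff)

lemma cluster_pt_iff_ybar: "cluster_pt x c \<longleftrightarrow> cluster_pt ybar c"
  using ybar_tendsto_diff by (rule cluster_pt_cong_tendsto_diff)

lemma cluster_pt_hprox_fixed_point:
  assumes "lsc_fun \<phi>" and "cluster_pt x c"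
  shows "\<phi> c = ereal limit_value" "hmoreau \<phi> p \<gamma> c = ereal limit_value" "c \<in> hprox \<phi> p \<gamma> c"
proof -
  obtain r where r: "strict_mono r" "(x \<circ> r) \<longlonglongrightarrow> c" using assms(2) unfolding cluster_pt_def by blast
  have "(ybar \<circ> r) \<longlonglongrightarrow> c"
    using tendsto_diff[OF r(2) LIMSEQ_subseq_LIMSEQ[OF ybar_tendsto_diff r(1)]] by (simp add: comp_def)
  moreover have "(\<lambda>n. env ((x \<circ> r) n)) \<longlonglongrightarrow> limit_value"
    using LIMSEQ_subseq_LIMSEQ[OF env_tendsto r(1)] by (simp add: comp_def)
  moreover have "(\<lambda>n. \<phi> ((ybar \<circ> r) n)) \<longlonglongrightarrow> ereal limit_value"
    using LIMSEQ_subseq_LIMSEQ[OF phi_ybar_tendsto r(1)] by (simp add: comp_def)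
  ultimately show "\<phi> c = ereal limit_value" "hmoreau \<phi> p \<gamma> c = ereal limit_value" "c \<in> hprox \<phi> p \<gamma> c"
    using hprox_fixed_point_of_limits[OF assms(1) r(2)] by blast+
qed

end

theorem theorem10:
  fixes \<phi> :: "'a::euclidean_space \<Rightarrow> ereal"
    and p \<gamma> \<sigma> \<theta> :: real
    and \<epsilon> \<delta> :: "nat \<Rightarrow> real"
    and P :: "nat \<Rightarrow> 'a \<Rightarrow> 'a"
    and x d ybar :: "nat \<Rightarrow> 'a"
    and mk :: "nat \<Rightarrow> nat"
  defines "xbar \<equiv> (\<lambda>k. P k (x k))"
    and "\<phi>eps \<equiv> (\<lambda>j z. prox_obj \<phi> p \<gamma> z (P j z))"
    and "trial \<equiv> (\<lambda>k m. (1 - \<theta> ^ m) *\<^sub>R P k (x k) + \<theta> ^ m *\<^sub>R (x k + d k))"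
  assumes p: "p > 1"
    and \<phi>_proper: "proper_fun \<phi>" and \<phi>_lsc: "lsc_fun \<phi>" and \<phi>_bdd: "bounded_below_fun \<phi>"
    and \<gamma>: "\<gamma> > 0" and \<sigma>: "0 < \<sigma>" "\<sigma> < 1 / (p * \<gamma>)" and \<theta>: "0 < \<theta>" "\<theta> < 1"
    and \<epsilon>_pos: "\<And>k. \<epsilon> k > 0" and \<epsilon>_noninc: "\<And>k. \<epsilon> (Suc k) \<le> \<epsilon> k" and \<epsilon>_sum: "summable \<epsilon>"
    and \<delta>_pos: "\<And>k. \<delta> k > 0" and \<delta>_noninc: "\<And>k. \<delta> (Suc k) \<le> \<delta> k" and \<delta>_lim: "\<delta> \<longlonglongrightarrow> 0"
    and P_iter: "\<And>k. inexact_prox \<phi> p \<gamma> (\<epsilon> k) (\<delta> k) (x k) (P k (x k))"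
    and P_trial: "\<And>k m. m \<le> mk k \<Longrightarrow>
          inexact_prox \<phi> p \<gamma> (\<epsilon> (Suc k)) (\<delta> (Suc k)) (trial k m) (P (Suc k) (trial k m))"
    and ls_fail: "\<And>k m. m < mk k \<Longrightarrow>
          \<not> (\<phi>eps (Suc k) (trial k m) \<le> \<phi>eps k (x k)
                 - ereal (\<sigma> * norm (x k - P k (x k)) powr p) + ereal (\<epsilon> k) + ereal (\<epsilon> (Suc k)))"
    and ls_accept: "\<And>k. \<phi>eps (Suc k) (trial k (mk k)) \<le> \<phi>eps k (x k)
                 - ereal (\<sigma> * norm (x k - P k (x k)) powr p) + ereal (\<epsilon> k) + ereal (\<epsilon> (Suc k))"
    and x_step: "\<And>k. x (Suc k) = trial k (mk k)"
    and ybar_in: "\<And>k. ybar k \<in> hprox \<phi> p \<gamma> (x k)"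
    and ybar_dist: "\<And>k. norm (xbar k - ybar k) = infdist (xbar k) (hprox \<phi> p \<gamma> (x k))"
  shows
    "(summable (\<lambda>k. norm (x k - xbar k) powr p) \<and> (\<lambda>k. x k - xbar k) \<longlonglongrightarrow> 0)
     \<and> ({c. cluster_pt x c} = {c. cluster_pt xbar c} \<and> {c. cluster_pt x c} = {c. cluster_pt ybar c}
        \<and> (\<forall>c. cluster_pt x c \<longrightarrow> c \<in> hprox \<phi> p \<gamma> c))
     \<and> (\<exists>F::real.
          (\<lambda>k. hmoreau \<phi> p \<gamma> (x k)) \<longlonglongrightarrow> ereal F
        \<and> (\<lambda>k. \<phi> (ybar k)) \<longlonglongrightarrow> ereal F
        \<and> (\<lambda>k. \<phi>eps k (x k)) \<longlonglongrightarrow> ereal F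
        \<and> (\<lambda>k. \<phi> (xbar k)) \<longlonglongrightarrow> ereal F
        \<and> (\<forall>c. cluster_pt x c \<longrightarrow> \<phi> c = ereal F \<and> hmoreau \<phi> p \<gamma> c = ereal F)
        \<and> (bounded (range x) \<longrightarrow> (\<lambda>k. hmoreau \<phi> p \<gamma> (ybar k)) \<longlonglongrightarrow> ereal F))
     \<and> (\<forall>c1 c2. cluster_pt x c1 \<and> cluster_pt x c2 \<longrightarrow>
          \<phi> c1 = \<phi> c2 \<and> hmoreau \<phi> p \<gamma> c1 = hmoreau \<phi> p \<gamma> c2)"
proof -
  obtain b where "\<And>z. ereal b \<le> \<phi> z" using \<phi>_bdd unfolding bounded_below_fun_def by blast
  then interpret inexact_prox_descent \<phi> p \<gamma> b \<sigma> \<epsilon> \<delta> x xbar ybar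
    using p \<gamma> \<phi>_proper \<sigma>(1) \<epsilon>_pos \<epsilon>_sum \<delta>_lim P_iter ybar_in ybar_dist ls_accept x_step
    by unfold_locales (auto simp: xbar_def \<phi>eps_def less_imp_le)
  have "(\<lambda>k. \<phi>eps k (x k)) = (\<lambda>k. prox_obj \<phi> p \<gamma> (x k) (xbar k))"
    unfolding \<phi>eps_def xbar_def ..
  then show ?thesis
    using residual_summable residual_tendsto_zero cluster_pt_iff_xbar cluster_pt_iff_ybar
      cluster_pt_hprox_fixed_point[OF \<phi>_lsc] hmoreau_tendsto phi_ybar_tendsto
      prox_obj_xbar_tendsto phi_xbar_tendsto hmoreau_ybar_tendsto
    by (auto intro!: exI[of _ limit_value])
qed

end
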